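(* Let $d\ge 2$ and let $\nu=(\nu_1,\dots,\nu_d)$ be probability distributions on $\mathbb{Z}_+^d$ forming the progeny distribution of a $d$-type branching process $\mathbf Z$ which is irreducible, non-degenerated, and critical or subcritical. For $i\in[d]$ let $O_i$ be the total number of individuals of type $i$ born up to the extinction time $T$, and for $i\neq j$ let $A_{ij}$ be the total number of individuals of type $j$ whose parent is of type $i$, up to time $T$. Then for all integers $r_i,n_i,k_{ij}$, $i,j\in[d]$, such that $r_i\ge 0$, $r_1+\dots+r_d\ge 1$, $k_{ij}\ge 0$ for $i\ne j$, $-k_{jj}=r_j+\sum_{i\ne j}k_{ij}$ for all $j$, and $n_i\ge -k_{ii}$ for all $i$, we have $$\mathbb{P}_{\mathrm r}\Big(O_1=n_1,\dots,O_d=n_d,\ A_{ij}=k_{ij},\ i,j\in[d],\ i\neq j\Big)=\frac{\det(K)}{\bar n_1\bar n_2\cdots\bar n_d}\prod_{i=1}^d\nu_i^{*n_i}\big(k_{i1},\dots,k_{i(i-1)},n_i+k_{ii},k_{i(i+1)},\dots,k_{id}\big),$$ where $\mathrm r=(r_1,\dots,r_d)$, $\nu_i^{*0}=\delta_0$, $\bar n_i=n_i\vee 1$, and $K$ is the matrix $(-k_{ij})_{i,j\in[d]}$ from which the line $i$ and the column $i$ have been removed for every $i$ such that $n_i=0$.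
   Context: $[d]=\{1,\dots,d\}$, $\mathbb{Z}_+=\{0,1,2,\dots\}$. A $d$-type branching process with progeny distribution $\nu=(\nu_1,\dots,\nu_d)$ is the $\mathbb{Z}_+^d$-valued Markov chain $\mathbf Z_n=(Z^{(1)}_n,\dots,Z^{(d)}_n)$ with transition probabilities $P(\mathbf Z_{n+1}=\mathrm k\mid \mathbf Z_n=(r_1,\dots,r_d))=\nu_1^{*r_1}*\dots*\nu_d^{*r_d}(\mathrm k)$, where $\nu^{*r}$ is the $r$-fold convolution power ($\nu^{*0}=\delta_0$); $Z^{(i)}_n$ is the number of individuals of type $i$ in generation $n$, each individual of type $i$ independently having a random vector of children (numbers of children of each type) with law $\nu_i$. The process is realized as the genealogical forest of these individuals, so that the type of each individual's parent is defined. $\mathbb{P}_{\mathrm r}$ denotes the law when $\mathbf Z_0=\mathrm r$. The mean matrix is $M=(m_{ij})$ with $m_{ij}=\sum_{\mathbf z\in\mathbb{Z}_+^d} z_j\nu_i(\mathbf z)$; irreducible means $M$ is irreducible, and then its Perron–Frobenius eigenvalue $\rho$ satisfies $\rho\le 1$ (critical: $\rho=1$, subcritical: $\rho<1$). Non-degenerated means it is not the case that every individual has exactly one child almost surely. Under these assumptions the extinction time $T=\inf\{n:\mathbf Z_n=0\}$ is a.s. finite, and $O_i=\sum_{n\ge 0}Z^{(i)}_n$. *)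

theory Defs
  imports "HOL-Analysis.Analysis" "HOL-Probability.Probability"
begin

text \<open>Types are indexed by a finite type 'd (so d = CARD('d)); a vector in Z_+^d is a
  function 'd => nat.\<close>

definition conv_pmf :: "('d \<Rightarrow> nat) pmf \<Rightarrow> ('d \<Rightarrow> nat) pmf \<Rightarrow> ('d \<Rightarrow> nat) pmf" where
  "conv_pmf p q = bind_pmf p (\<lambda>x. bind_pmf q (\<lambda>y. return_pmf (\<lambda>j. x j + y j)))"

fun conv_pow :: "('d \<Rightarrow> nat) pmf \<Rightarrow> nat \<Rightarrow> ('d \<Rightarrow> nat) pmf" where
  "conv_pow p 0 = return_pmf (\<lambda>_. 0)"
| "conv_pow p (Suc m) = conv_pmf p (conv_pow p m)"

definition mean_matrix :: "('d \<Rightarrow> ('d \<Rightarrow> nat) pmf) \<Rightarrow> 'd \<Rightarrow> 'd \<Rightarrow> real" where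
  "mean_matrix \<nu> i j = measure_pmf.expectation (\<nu> i) (\<lambda>z. real (z j))"

fun mat_pow :: "('d::finite \<Rightarrow> 'd \<Rightarrow> real) \<Rightarrow> nat \<Rightarrow> 'd \<Rightarrow> 'd \<Rightarrow> real" where
  "mat_pow M 0 = (\<lambda>i j. if i = j then 1 else 0)"
| "mat_pow M (Suc m) = (\<lambda>i j. \<Sum>l\<in>UNIV. mat_pow M m i l * M l j)"

definition irreducible_mat :: "('d::finite \<Rightarrow> 'd \<Rightarrow> real) \<Rightarrow> bool" where
  "irreducible_mat M \<longleftrightarrow> (\<forall>i j. \<exists>n>0. mat_pow M n i j > 0)"

text \<open>Spectral radius (= Perron-Frobenius eigenvalue for irreducible nonnegative M)
  is at most c: every complex eigenvalue has modulus at most c.\<close>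
definition spectral_radius_le :: "('d::finite \<Rightarrow> 'd \<Rightarrow> real) \<Rightarrow> real \<Rightarrow> bool" where
  "spectral_radius_le M c \<longleftrightarrow>
     (\<forall>(lam::complex) (v::'d \<Rightarrow> complex). v \<noteq> (\<lambda>_. 0) \<and>
        (\<forall>i. (\<Sum>j\<in>UNIV. complex_of_real (M i j) * v j) = lam * v i) \<longrightarrow> cmod lam \<le> c)"

definition degenerate :: "('d::finite \<Rightarrow> ('d \<Rightarrow> nat) pmf) \<Rightarrow> bool" where
  "degenerate \<nu> \<longleftrightarrow> (\<forall>i. \<forall>z\<in>set_pmf (\<nu> i). (\<Sum>j\<in>UNIV. z j) = 1)"

text \<open>State (Z, A): Z = current generation,
  A i j = cumulative number (so far) of type-j individuals born to type-i parents.
  Given Z, the matrix C of children (C i j = type-j children of type-i parents in the next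
  generation) has independent rows, row i distributed as nu_i^{*Z_i}.\<close>
definition bp_step :: "('d::finite \<Rightarrow> ('d \<Rightarrow> nat) pmf) \<Rightarrow> ('d \<Rightarrow> nat) \<times> ('d \<Rightarrow> 'd \<Rightarrow> nat)
     \<Rightarrow> (('d \<Rightarrow> nat) \<times> ('d \<Rightarrow> 'd \<Rightarrow> nat)) pmf" where
  "bp_step \<nu> s = map_pmf (\<lambda>C. (\<lambda>j. \<Sum>i\<in>UNIV. C i j, \<lambda>i j. snd s i j + C i j))
      (Pi_pmf UNIV (\<lambda>_. 0) (\<lambda>i. conv_pow (\<nu> i) (fst s i)))"

fun bp_state :: "('d::finite \<Rightarrow> ('d \<Rightarrow> nat) pmf) \<Rightarrow> ('d \<Rightarrow> nat) \<Rightarrow> nat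
     \<Rightarrow> (('d \<Rightarrow> nat) \<times> ('d \<Rightarrow> 'd \<Rightarrow> nat)) pmf" where
  "bp_state \<nu> r 0 = return_pmf (r, \<lambda>_ _. 0)"
| "bp_state \<nu> r (Suc N) = bind_pmf (bp_state \<nu> r N) (bp_step \<nu>)"

text \<open>P_r(O_i = n_i for all i, A_ij = k_ij for all i ~= j).  Since the totals are finite on
  this event, the process is extinct on it, so it is the increasing union over N of the
  events {Z_N = 0, totals after N generations equal the targets}.  Here
  O_j = r_j + sum_i A_ij (all type-j individuals, including generation 0).\<close>
definition prob_OA :: "('d::finite \<Rightarrow> ('d \<Rightarrow> nat) pmf) \<Rightarrow> ('d \<Rightarrow> nat)
     \<Rightarrow> ('d \<Rightarrow> int) \<Rightarrow> ('d \<Rightarrow> 'd \<Rightarrow> int) \<Rightarrow> real" where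
  "prob_OA \<nu> r n k = (SUP N. measure_pmf.prob (bp_state \<nu> r N)
      {(Z, A). Z = (\<lambda>_. 0) \<and> (\<forall>j. int (r j + (\<Sum>i\<in>UNIV. A i j)) = n j)
               \<and> (\<forall>i j. i \<noteq> j \<longrightarrow> int (A i j) = k i j)})"

definition det_on :: "'d set \<Rightarrow> ('d \<Rightarrow> 'd \<Rightarrow> real) \<Rightarrow> real" where
  "det_on S M = (\<Sum>p\<in>{p. p permutes S}. of_int (sign p) * (\<Prod>i\<in>S. M i (p i)))"

end

theory Submission
  imports Defs "HOL-Library.Function_Algebras"
begin

text \<open>Induction on the total number of individuals. Conditionally on the first generation, the
  rest of the forest consists of independent forests rooted at the children of the roots, so the
  probability satisfies a one-step recursion. The right-hand side satisfies the same recursion: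
  the determinant is multilinear in the rows, and by exchangeability a sum of \<open>s\<close> out of
  \<open>s + t\<close> i.i.d. offspring vectors with total \<open>a\<close> has mean \<open>s / (s + t) \<cdot> a\<close>.\<close>

section \<open>Convolution of functions on \<open>\<nat>\<^sup>d\<close>\<close>

lemma finite_atMost_fun:
  fixes a :: "'d::finite \<Rightarrow> 'b::order"
  assumes "\<And>x. finite {..a x}"
  shows "finite {..a}"
proof (rule finite_subset)
  show "{..a} \<subseteq> PiE UNIV (\<lambda>x. {..a x})" by (auto simp: le_fun_def)
qed (auto intro: finite_PiE assms)

lemma finite_atMost_nat_fun [simp]: "finite {..(a::'d::finite \<Rightarrow> nat)}"
  by (rule finite_atMost_fun) simp

lemma finite_atMost_nat_matrix [simp]: "finite {..(A::'d::finite \<Rightarrow> 'e::finite \<Rightarrow> nat)}"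
  by (rule finite_atMost_fun) simp

lemma atMost_nat_matrix_PiE: "{..(A::'d::finite \<Rightarrow> 'e::finite \<Rightarrow> nat)} = PiE UNIV (\<lambda>i. {..A i})"
  by (auto simp: le_fun_def PiE_iff)

lemma nat_fun_diff_diff_cancel: "c \<le> a \<Longrightarrow> a - (a - c) = (c::'d \<Rightarrow> nat)"
  by (auto simp: le_fun_def fun_eq_iff)

lemma nat_fun_diff_diff_diff: "b \<le> c \<Longrightarrow> a - b - (c - b) = a - (c::'d \<Rightarrow> nat)"
  by (auto simp: le_fun_def fun_eq_iff)

lemma nat_fun_diff_le: "a - c \<le> (a::'d \<Rightarrow> nat)"
  by (auto simp: le_fun_def)

lemma nat_fun_add_diff_cancel_left: "b + e - b = (e::'d \<Rightarrow> nat)"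
  by (auto simp: fun_eq_iff)

lemma nat_fun_add_diff_inverse: "b \<le> c \<Longrightarrow> b + (c - b) = (c::'d \<Rightarrow> nat)"
  by (auto simp: le_fun_def fun_eq_iff)

lemma nat_fun_le_diff_iff: "b \<le> a \<Longrightarrow> e \<le> a - b \<longleftrightarrow> b + e \<le> (a::'d \<Rightarrow> nat)"
  by (auto simp: le_fun_def) (metis add_le_imp_le_diff le_diff_conv2 add.commute)+

definition convolution ::
    "(('d::finite \<Rightarrow> nat) \<Rightarrow> 'a::comm_semiring_1) \<Rightarrow> (('d \<Rightarrow> nat) \<Rightarrow> 'a) \<Rightarrow> ('d \<Rightarrow> nat) \<Rightarrow> 'a" where
  "convolution f g a = (\<Sum>c\<in>{..a}. f c * g (a - c))"

lemma convolution_commute: "convolution f g = convolution g f"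
proof
  fix a
  show "convolution f g a = convolution g f a"
    unfolding convolution_def
    by (rule sum.reindex_bij_witness[where i="\<lambda>c. a - c" and j="\<lambda>c. a - c"])
       (auto simp: nat_fun_diff_diff_cancel nat_fun_diff_le mult.commute)
qed

lemma convolution_assoc: "convolution (convolution f g) h = convolution f (convolution g h)"
proof
  fix a
  have "convolution (convolution f g) h a =
        (\<Sum>c\<in>{..a}. \<Sum>b\<in>{b\<in>{..a}. b \<le> c}. f b * g (c - b) * h (a - c))"
    unfolding convolution_def sum_distrib_right
    by (intro sum.cong refl) (auto intro: order_trans)
  also have "\<dots> = (\<Sum>b\<in>{..a}. \<Sum>c\<in>{c\<in>{..a}. b \<le> c}. f b * g (c - b) * h (a - c))"
    by (rule sum.swap_restrict) auto
  also have "\<dots> = (\<Sum>b\<in>{..a}. \<Sum>e\<in>{..a - b}. f b * g e * h (a - b - e))"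
  proof (rule sum.cong[OF refl])
    fix b assume "b \<in> {..a}"
    then show "(\<Sum>c\<in>{c\<in>{..a}. b \<le> c}. f b * g (c - b) * h (a - c)) =
               (\<Sum>e\<in>{..a - b}. f b * g e * h (a - b - e))"
      by (intro sum.reindex_bij_witness[where i="\<lambda>e. b + e" and j="\<lambda>c. c - b"])
         (auto simp: nat_fun_diff_diff_diff nat_fun_add_diff_cancel_left nat_fun_add_diff_inverse
            nat_fun_le_diff_iff, auto simp: le_fun_def intro: diff_le_mono)
  qed
  also have "\<dots> = convolution f (convolution g h) a"
    unfolding convolution_def sum_distrib_left by (simp add: mult.assoc)
  finally show "convolution (convolution f g) h a = convolution f (convolution g h) a" .
qed

lemma convolution_indicator_zero: "convolution (\<lambda>c. if c = 0 then 1 else 0) g = g"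
proof
  fix a
  have "convolution (\<lambda>c. if c = 0 then 1 else 0) g a = (\<Sum>c\<in>{..a}. if c = 0 then g (a - c) else 0)"
    unfolding convolution_def by (intro sum.cong) auto
  then show "convolution (\<lambda>c. if c = 0 then 1 else 0) g a = g a"
    by (simp add: sum.delta)
qed

lemma convolution_scale_left: "convolution (\<lambda>x. s * f x) g = (\<lambda>x. s * convolution f g x)"
  unfolding convolution_def by (auto simp: sum_distrib_left fun_eq_iff ac_simps)

lemma convolution_scale_right: "convolution f (\<lambda>x. s * g x) = (\<lambda>x. s * convolution f g x)"
  unfolding convolution_def by (auto simp: sum_distrib_left fun_eq_iff ac_simps)

lemma coordinate_times_convolution:
  "of_nat (a j) * convolution f g a =
   convolution (\<lambda>c. of_nat (c j) * f c) g a + convolution f (\<lambda>c. of_nat (c j) * g c) a"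
  unfolding convolution_def sum_distrib_left sum.distrib[symmetric]
proof (rule sum.cong[OF refl])
  fix c assume "c \<in> {..a}"
  then have "of_nat (a j) = (of_nat (c j) + of_nat ((a - c) j) :: 'a)"
    by (auto simp: le_fun_def simp flip: of_nat_add)
  then show "of_nat (a j) * (f c * g (a - c)) =
        of_nat (c j) * f c * g (a - c) + f c * (of_nat ((a - c) j) * g (a - c))"
    by (simp add: algebra_simps)
qed

lemma pmf_conv_pmf:
  fixes p q :: "('d::finite \<Rightarrow> nat) pmf"
  shows "pmf (conv_pmf p q) = convolution (pmf p) (pmf q)"
proof
  fix a :: "'d \<Rightarrow> nat"
  have conv_pmf_eq: "conv_pmf p q = map_pmf (\<lambda>(x, y). x + y) (pair_pmf p q)"
    unfolding conv_pmf_def pair_pmf_def by (simp add: map_bind_pmf plus_fun_def)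
  have "(\<lambda>(x, y). x + y) -` {a} = (\<lambda>c. (c, a - c)) ` {..a}"
    by (auto simp: le_fun_def fun_eq_iff image_iff intro!: exI[where x="fst _"])
  then have "pmf (conv_pmf p q) a = measure (measure_pmf (pair_pmf p q)) ((\<lambda>c. (c, a - c)) ` {..a})"
    by (simp add: conv_pmf_eq pmf_map)
  also have "\<dots> = sum (pmf (pair_pmf p q)) ((\<lambda>c. (c, a - c)) ` {..a})"
    by (rule measure_measure_pmf_finite) simp
  also have "\<dots> = convolution (pmf p) (pmf q) a"
    unfolding convolution_def by (subst sum.reindex) (auto simp: inj_on_def pmf_pair)
  finally show "pmf (conv_pmf p q) a = convolution (pmf p) (pmf q) a" .
qed

lemma pmf_conv_pow_0 [simp]: "pmf (conv_pow p 0) = (\<lambda>c. if c = 0 then 1 else 0)"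
  by (simp add: fun_eq_iff zero_fun_def)

lemma pmf_conv_pow_Suc: "pmf (conv_pow p (Suc s)) = convolution (pmf p) (pmf (conv_pow p s))"
  by (simp add: pmf_conv_pmf)

declare conv_pow.simps [simp del]

lemma pmf_conv_pow_add:
  "pmf (conv_pow p (s + t)) = convolution (pmf (conv_pow p s)) (pmf (conv_pow p t))"
proof (induction s)
  case 0
  show ?case by (simp only: pmf_conv_pow_0 convolution_indicator_zero add_0)
next
  case (Suc s)
  then show ?case by (simp only: add_Suc pmf_conv_pow_Suc convolution_assoc)
qed

lemma coordinate_times_pmf_conv_pow:
  fixes p :: "('d::finite \<Rightarrow> nat) pmf"
  shows "(\<lambda>c. real (c j) * pmf (conv_pow p (Suc s)) c) =
   (\<lambda>c. real (Suc s) * convolution (\<lambda>x. real (x j) * pmf p x) (pmf (conv_pow p s)) c)"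
proof (induction s)
  case 0
  have "(\<lambda>c. real (c j) * pmf (conv_pow p 0) c) = (\<lambda>_. 0)"
    by auto
  moreover have "convolution f (\<lambda>_. 0) = (\<lambda>_. 0)" for f :: "('d \<Rightarrow> nat) \<Rightarrow> real"
    by (simp add: convolution_def fun_eq_iff)
  ultimately show ?case
    by (subst pmf_conv_pow_Suc, subst coordinate_times_convolution) simp
next
  case (Suc s)
  let ?m = "\<lambda>x. real (x j) * pmf p x"
  have swap: "convolution (pmf p) (convolution ?m (pmf (conv_pow p s))) =
              convolution ?m (pmf (conv_pow p (Suc s)))"
    by (simp only: convolution_assoc[symmetric] convolution_commute[of "pmf p"])
       (simp only: convolution_assoc pmf_conv_pow_Suc)
  show ?case
  proof
    fix a
    have "real (a j) * pmf (conv_pow p (Suc (Suc s))) a =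
          convolution ?m (pmf (conv_pow p (Suc s))) a +
          convolution (pmf p) (\<lambda>c. real (c j) * pmf (conv_pow p (Suc s)) c) a"
      by (subst pmf_conv_pow_Suc) (rule coordinate_times_convolution)
    also have "\<dots> = convolution ?m (pmf (conv_pow p (Suc s))) a +
                     real (Suc s) * convolution ?m (pmf (conv_pow p (Suc s))) a"
      unfolding Suc convolution_scale_right swap ..
    finally show "real (a j) * pmf (conv_pow p (Suc (Suc s))) a =
                  real (Suc (Suc s)) * convolution ?m (pmf (conv_pow p (Suc s))) a"
      by (simp add: algebra_simps)
  qed
qed

text \<open>Exchangeability: given that a sum of \<open>s + t\<close> i.i.d. vectors equals \<open>a\<close>,
  the first \<open>s\<close> of them contribute in mean the fraction \<open>s / (s + t)\<close> of \<open>a\<close>.\<close>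
lemma conv_pow_split_coordinate_mean:
  fixes p :: "('d::finite \<Rightarrow> nat) pmf"
  shows "real (s + t) * (\<Sum>c\<in>{..a}. pmf (conv_pow p s) c * pmf (conv_pow p t) (a - c) * real (c j))
     = real s * real (a j) * pmf (conv_pow p (s + t)) a"
proof (cases s)
  case 0
  have "(\<Sum>c\<in>{..a}. pmf (conv_pow p s) c * pmf (conv_pow p t) (a - c) * real (c j)) = 0"
    by (intro sum.neutral) (auto simp: 0)
  then show ?thesis by (simp add: 0)
next
  case (Suc s')
  let ?m = "\<lambda>x. real (x j) * pmf p x"
  have "(\<Sum>c\<in>{..a}. pmf (conv_pow p s) c * pmf (conv_pow p t) (a - c) * real (c j))
        = convolution (\<lambda>c. real (c j) * pmf (conv_pow p s) c) (pmf (conv_pow p t)) a"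
    unfolding convolution_def by (intro sum.cong) auto
  also have "\<dots> = real s * convolution ?m (pmf (conv_pow p (s' + t))) a"
    unfolding Suc coordinate_times_pmf_conv_pow convolution_scale_left
    by (simp add: convolution_assoc pmf_conv_pow_add)
  also have "\<dots> * real (s + t) = real s * real (a j) * pmf (conv_pow p (s + t)) a"
    using fun_cong[OF coordinate_times_pmf_conv_pow[of j p "s' + t"], of a] by (simp add: Suc)
  finally show ?thesis by (simp add: algebra_simps)
qed

lemma conv_pow_split_row:
  fixes p :: "('d::finite \<Rightarrow> nat) pmf"
  assumes "r \<le> n"
  shows "(\<Sum>c\<in>{..a}. pmf (conv_pow p r) c * pmf (conv_pow p (n - r)) (a - c) * (x - real (a j - c j)))
         = pmf (conv_pow p n) a * (x - real (n - r) / real n * real (a j))"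
proof -
  let ?W = "\<lambda>c. pmf (conv_pow p r) c * pmf (conv_pow p (n - r)) (a - c)"
  have n_split: "n = r + (n - r)" using assms by simp
  have total: "(\<Sum>c\<in>{..a}. ?W c) = pmf (conv_pow p n) a"
    by (subst n_split) (simp add: pmf_conv_pow_add convolution_def)
  have mean: "(\<Sum>c\<in>{..a}. ?W c * real (c j)) = real r / real n * real (a j) * pmf (conv_pow p n) a"
  proof (cases "n = 0")
    case True
    with assms show ?thesis by (auto intro!: sum.neutral)
  next
    case False
    then show ?thesis
      using conv_pow_split_coordinate_mean[of r "n - r" p a j] n_split by (simp add: field_simps)
  qed
  have "(\<Sum>c\<in>{..a}. ?W c * (x - real (a j - c j))) =
        (\<Sum>c\<in>{..a}. ?W c * (x - real (a j)) + ?W c * real (c j))"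
    by (intro sum.cong refl) (auto simp: le_fun_def of_nat_diff algebra_simps)
  also have "\<dots> = pmf (conv_pow p n) a * (x - real (a j) + real r / real n * real (a j))"
    by (simp add: sum.distrib total mean flip: sum_distrib_right) (simp add: algebra_simps)
  also have "\<dots> = pmf (conv_pow p n) a * (x - real (n - r) / real n * real (a j))"
  proof (cases "n = 0")
    case True
    with assms show ?thesis by (auto simp: pmf_conv_pow_0)
  next
    case False
    with assms show ?thesis by (simp add: of_nat_diff diff_divide_distrib algebra_simps)
  qed
  finally show ?thesis .
qed

section \<open>Determinants of principal submatrices\<close>

lemma det_on_cong:
  assumes "\<And>i j. i \<in> S \<Longrightarrow> j \<in> S \<Longrightarrow> M i j = M' i j"
  shows "det_on S M = det_on S M'"
  unfolding det_on_def using assms by (intro sum.cong prod.cong refl) (auto simp: permutes_in_image)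

lemma det_on_UNIV_eq_det_on:
  fixes M :: "'d::finite \<Rightarrow> 'd \<Rightarrow> real"
  assumes unit_rows: "\<And>i j. i \<notin> S \<Longrightarrow> M i j = of_bool (i = j)"
  shows "det_on UNIV M = det_on S M"
proof -
  have "det_on UNIV M = (\<Sum>p\<in>{p. p permutes S}. of_int (sign p) * (\<Prod>i\<in>UNIV. M i (p i)))"
    unfolding det_on_def
  proof (rule sum.mono_neutral_right)
    show "\<forall>p\<in>{p. p permutes UNIV} - {p. p permutes S}. of_int (sign p) * (\<Prod>i\<in>UNIV. M i (p i)) = 0"
    proof
      fix p assume "p \<in> {p. p permutes UNIV} - {p. p permutes S}"
      then obtain i where "i \<notin> S" "p i \<noteq> i" unfolding permutes_def by blast
      then have "M i (p i) = 0" by (simp add: unit_rows)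
      then show "of_int (sign p) * (\<Prod>i\<in>UNIV. M i (p i)) = 0"
        by (auto simp: prod_zero_iff)
    qed
  qed (auto simp: finite_permutations intro: permutes_subset)
  also have "\<dots> = det_on S M"
    unfolding det_on_def
  proof (intro sum.cong refl)
    fix p assume "p \<in> {p. p permutes S}"
    then have "(\<Prod>i\<in>UNIV - S. M i (p i)) = 1"
      by (intro prod.neutral) (auto simp: permutes_not_in unit_rows)
    then show "of_int (sign p) * (\<Prod>i\<in>UNIV. M i (p i)) = of_int (sign p) * (\<Prod>i\<in>S. M i (p i))"
      using prod.subset_diff[of S UNIV "\<lambda>i. M i (p i)"] by simp
  qed
  finally show ?thesis .
qed

lemma det_on_unit: "det_on (UNIV::'d::finite set) (\<lambda>i j. of_bool (i = j)) = 1"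
  by (subst det_on_UNIV_eq_det_on[where S="{}"]) (auto simp: det_on_def)

lemma det_on_scale_rows:
  "det_on UNIV (\<lambda>i j. c i * M i j) = (\<Prod>i\<in>UNIV. c i) * det_on (UNIV::'d::finite set) M"
  unfolding det_on_def sum_distrib_left
  by (intro sum.cong refl) (simp add: prod.distrib algebra_simps)

lemma det_on_replace_rows_by_unit:
  fixes M :: "'d::finite \<Rightarrow> 'd \<Rightarrow> real"
  assumes cols: "\<And>t j. t \<in> T \<Longrightarrow> j \<noteq> t \<Longrightarrow> M j t = 0"
  shows "det_on UNIV M =
    (\<Prod>t\<in>T. M t t) * det_on UNIV (\<lambda>i j. if i \<in> T then of_bool (i = j) else M i j)"
  unfolding det_on_def sum_distrib_left
proof (intro sum.cong refl)
  fix p assume "p \<in> {p. p permutes (UNIV::'d set)}"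
  then have p: "p permutes (UNIV::'d set)" by simp
  let ?M' = "\<lambda>i j. if i \<in> T then of_bool (i = j) else M i j"
  have "(\<Prod>i\<in>UNIV. M i (p i)) = (\<Prod>t\<in>T. M t t) * (\<Prod>i\<in>UNIV. ?M' i (p i))"
  proof (cases "\<forall>t\<in>T. p t = t")
    case True
    then have "(\<Prod>i\<in>UNIV. M i (p i)) = (\<Prod>i\<in>UNIV. if i \<in> T then M i i else M i (p i))"
      by (intro prod.cong) auto
    then show ?thesis using True by (simp add: prod.If_cases Int_def)
  next
    case False
    then obtain t where t: "t \<in> T" "p t \<noteq> t" by blast
    define s where "s = inv p t"
    have "p s = t" unfolding s_def using permutes_inverses(1)[OF p] by simp
    with t have "s \<noteq> t" by auto
    with \<open>p s = t\<close> have "M s (p s) = 0" using cols t(1) by simp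
    then have "(\<Prod>i\<in>UNIV. M i (p i)) = 0" by (intro prod_zero) auto
    moreover have "(\<Prod>i\<in>UNIV. ?M' i (p i)) = 0" using t by (intro prod_zero) (auto intro!: exI[of _ t])
    ultimately show ?thesis by (metis mult_zero_right)
  qed
  then show "of_int (sign p) * (\<Prod>i\<in>UNIV. M i (p i)) =
        (\<Prod>t\<in>T. M t t) * (of_int (sign p) * (\<Prod>i\<in>UNIV. ?M' i (p i)))"
    by simp
qed

lemma det_on_eq_0_if_left_kernel:
  fixes M :: "'d::finite \<Rightarrow> 'd \<Rightarrow> real"
  assumes "x \<noteq> (\<lambda>_. 0)" and kernel: "\<And>j. (\<Sum>i\<in>UNIV. x i * M i j) = 0"
  shows "det_on UNIV M = 0"
proof (rule ccontr)
  let ?X = "(\<chi> i j. M i j) :: real^'d^'d"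
  let ?x = "(\<chi> i. x i) :: real^'d"
  assume "det_on UNIV M \<noteq> 0"
  then have "invertible ?X"
    by (simp add: det_on_def det_def invertible_det_nz)
  then obtain B where B: "?X ** B = mat 1" by (auto simp: invertible_def)
  have "?x v* ?X = 0"
    using kernel by (simp add: vector_matrix_mult_def vec_eq_iff mult.commute)
  then have "?x = 0"
    by (metis B vector_matrix_mul_assoc vector_matrix_mul_rid vector_matrix_mult_0)
  with \<open>x \<noteq> (\<lambda>_. 0)\<close> show False by (auto simp: vec_eq_iff fun_eq_iff)
qed

lemma det_on_sum_rows:
  fixes A :: "'d::finite \<Rightarrow> 'e::finite \<Rightarrow> nat"
  shows "(\<Sum>C\<in>{..A}. (\<Prod>i\<in>UNIV. w i (C i)) * det_on UNIV (\<lambda>i j. f i (C i) j)) =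
         det_on UNIV (\<lambda>i j. \<Sum>c\<in>{..A i}. w i c * f i c j)"
proof -
  have "(\<Sum>C\<in>{..A}. (\<Prod>i\<in>UNIV. w i (C i)) * det_on UNIV (\<lambda>i j. f i (C i) j))
     = (\<Sum>p\<in>{p. p permutes UNIV}. of_int (sign p) *
          (\<Sum>C\<in>{..A}. \<Prod>i\<in>UNIV. w i (C i) * f i (C i) (p i)))"
    unfolding det_on_def sum_distrib_left
    by (subst sum.swap) (simp add: sum_distrib_left prod.distrib algebra_simps)
  also have "\<dots> = det_on UNIV (\<lambda>i j. \<Sum>c\<in>{..A i}. w i c * f i c j)"
    unfolding det_on_def atMost_nat_matrix_PiE
    by (intro sum.cong refl) (simp add: prod_sum_PiE)
  finally show ?thesis .
qed

section \<open>The multitype Kemperman formula\<close>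

definition nbar :: "('d \<Rightarrow> nat) \<Rightarrow> 'd \<Rightarrow> nat" where
  "nbar n i = max (n i) 1"

definition progeny_matrix :: "('d \<Rightarrow> nat) \<Rightarrow> ('d \<Rightarrow> 'd \<Rightarrow> nat) \<Rightarrow> 'd \<Rightarrow> 'd \<Rightarrow> real" where
  "progeny_matrix n A i j = real (nbar n i) * of_bool (i = j) - real (A i j)"

definition offspring_weight ::
    "('d::finite \<Rightarrow> ('d \<Rightarrow> nat) pmf) \<Rightarrow> ('d \<Rightarrow> nat) \<Rightarrow> ('d \<Rightarrow> 'd \<Rightarrow> nat) \<Rightarrow> real" where
  "offspring_weight \<nu> n A = (\<Prod>i\<in>UNIV. pmf (conv_pow (\<nu> i) (n i)) (A i))"

text \<open>The right-hand side of the theorem with natural-number parameters: \<open>A i j\<close> counts the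
  individuals of type \<open>j\<close> with a parent of type \<open>i\<close>, including \<open>i = j\<close>, so \<open>A i i = n i + k i i\<close>.\<close>
definition kemperman ::
    "('d::finite \<Rightarrow> ('d \<Rightarrow> nat) pmf) \<Rightarrow> ('d \<Rightarrow> nat) \<Rightarrow> ('d \<Rightarrow> 'd \<Rightarrow> nat) \<Rightarrow> real" where
  "kemperman \<nu> n A =
     det_on UNIV (progeny_matrix n A) / (\<Prod>i\<in>UNIV. real (nbar n i)) * offspring_weight \<nu> n A"

lemma offspring_weight_nonzero_row:
  assumes "offspring_weight \<nu> n A \<noteq> 0" and "n i = 0"
  shows "A i = 0"
proof -
  have "pmf (conv_pow (\<nu> i) (n i)) (A i) \<noteq> 0"
    using assms(1) by (auto simp: offspring_weight_def prod_zero_iff)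
  with assms(2) have "pmf (conv_pow (\<nu> i) 0) (A i) \<noteq> 0" by simp
  then show ?thesis by (simp split: if_splits)
qed

lemma kemperman_without_roots:
  fixes A :: "'d::finite \<Rightarrow> 'd \<Rightarrow> nat"
  assumes balance: "\<And>j. n j = (\<Sum>i\<in>UNIV. A i j)"
  shows "kemperman \<nu> n A = of_bool (A = 0)"
proof (cases "A = 0")
  case True
  then have "n = 0" using balance by (simp add: fun_eq_iff)
  then have "progeny_matrix n A = (\<lambda>i j. of_bool (i = j))"
    using True by (simp add: fun_eq_iff progeny_matrix_def nbar_def)
  with True \<open>n = 0\<close> show ?thesis
    by (simp add: kemperman_def det_on_unit offspring_weight_def nbar_def)
next
  case False
  show ?thesis
  proof (cases "offspring_weight \<nu> n A = 0")
    case nonzero: False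
    define x :: "'d \<Rightarrow> real" where "x i = of_bool (n i > 0)" for i
    obtain i0 j0 where "A i0 j0 \<noteq> 0" using False by (auto simp: fun_eq_iff)
    moreover have "A i0 j0 \<le> n j0" unfolding balance by (rule member_le_sum) auto
    ultimately have "x j0 \<noteq> 0" by (simp add: x_def)
    then have "x \<noteq> (\<lambda>_. 0)" by metis
    moreover have "(\<Sum>i\<in>UNIV. x i * progeny_matrix n A i j) = 0" for j
    proof -
      have "x i * progeny_matrix n A i j = of_bool (i = j) * real (n j) - real (A i j)" for i
        using offspring_weight_nonzero_row[OF nonzero, of i]
        by (cases "n i = 0") (auto simp: x_def progeny_matrix_def nbar_def)
      then show ?thesis by (simp add: sum_subtractf balance)
    qed
    ultimately have "det_on UNIV (progeny_matrix n A) = 0" by (rule det_on_eq_0_if_left_kernel)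
    with False show ?thesis by (simp add: kemperman_def)
  qed (simp add: kemperman_def False)
qed

text \<open>A type \<open>t\<close> with \<open>0 < n t = r t\<close> has no individuals outside the first generation, so column
  \<open>t\<close> of the progeny matrix vanishes off the diagonal; the other rows are merely rescaled.\<close>
lemma det_on_progeny_matrix_first_generation:
  fixes n r :: "'d::finite \<Rightarrow> nat" and A :: "'d \<Rightarrow> 'd \<Rightarrow> nat"
  assumes balance: "\<And>j. n j = r j + (\<Sum>i\<in>UNIV. A i j)"
    and empty_rows: "\<And>i. n i = 0 \<Longrightarrow> A i = 0"
  defines "F \<equiv> \<lambda>i j. real (nbar (n - r) i) * of_bool (i = j) - real (n i - r i) / real (n i) * real (A i j)"
  shows "det_on UNIV F / (\<Prod>i\<in>UNIV. real (nbar (n - r) i)) =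
         det_on UNIV (progeny_matrix n A) / (\<Prod>i\<in>UNIV. real (nbar n i))"
proof -
  define T where "T = {t. n t = r t \<and> 0 < n t}"
  define \<rho> where "\<rho> i = (if i \<in> T then 1 else real (nbar (n - r) i) / real (nbar n i))" for i
  define M where "M i j = (if i \<in> T then of_bool (i = j) else progeny_matrix n A i j)" for i j
  have r_le: "r i \<le> n i" for i using balance[of i] by simp
  have T_col: "A j t = 0" if "t \<in> T" for j t
    using that balance[of t] by (simp add: T_def)
  have "F = (\<lambda>i j. \<rho> i * M i j)"
  proof (intro ext)
    fix i j
    consider "i \<in> T" | "n i = 0" | "r i < n i" using r_le[of i] by (force simp: T_def)
    then show "F i j = \<rho> i * M i j"
    proof cases
      case 1
      then show ?thesis by (simp add: F_def \<rho>_def M_def T_def nbar_def)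
    next
      case 2
      then show ?thesis using empty_rows by (simp add: F_def \<rho>_def M_def T_def nbar_def progeny_matrix_def)
    next
      case 3
      then show ?thesis
        by (simp add: F_def \<rho>_def M_def T_def nbar_def progeny_matrix_def of_nat_diff field_simps)
    qed
  qed
  then have det_F: "det_on UNIV F = (\<Prod>i\<in>UNIV. \<rho> i) * det_on UNIV M"
    by (simp add: det_on_scale_rows)
  have det_L: "det_on UNIV (progeny_matrix n A) = (\<Prod>t\<in>T. real (n t)) * det_on UNIV M"
  proof -
    have "det_on UNIV (progeny_matrix n A) = (\<Prod>t\<in>T. progeny_matrix n A t t) * det_on UNIV M"
      unfolding M_def by (rule det_on_replace_rows_by_unit) (simp add: progeny_matrix_def T_col)
    also have "(\<Prod>t\<in>T. progeny_matrix n A t t) = (\<Prod>t\<in>T. real (n t))"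
      by (intro prod.cong) (auto simp: progeny_matrix_def nbar_def T_def T_col)
    finally show ?thesis .
  qed
  have "\<rho> i * real (nbar n i) = (if i \<in> T then real (n i) else 1) * real (nbar (n - r) i)" for i
    by (auto simp: \<rho>_def T_def nbar_def)
  then have "(\<Prod>i\<in>UNIV. \<rho> i) * (\<Prod>i\<in>UNIV. real (nbar n i)) =
             (\<Prod>i\<in>UNIV. (if i \<in> T then real (n i) else 1) * real (nbar (n - r) i))"
    by (simp flip: prod.distrib)
  also have "\<dots> = (\<Prod>t\<in>T. real (n t)) * (\<Prod>i\<in>UNIV. real (nbar (n - r) i))"
    by (simp add: prod.distrib prod.If_cases Int_def)
  finally have "(\<Prod>i\<in>UNIV. \<rho> i) =
      (\<Prod>t\<in>T. real (n t)) * (\<Prod>i\<in>UNIV. real (nbar (n - r) i)) / (\<Prod>i\<in>UNIV. real (nbar n i))"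
    by (simp add: eq_divide_eq nbar_def)
  then show ?thesis
    by (simp add: det_F det_L nbar_def)
qed

lemma kemperman_first_generation:
  fixes A :: "'d::finite \<Rightarrow> 'd \<Rightarrow> nat"
  assumes balance: "\<And>j. n j = r j + (\<Sum>i\<in>UNIV. A i j)"
  shows "(\<Sum>C\<in>{..A}. offspring_weight \<nu> r C * kemperman \<nu> (n - r) (A - C)) = kemperman \<nu> n A"
proof -
  define D where "D = (\<Prod>i\<in>UNIV. real (nbar (n - r) i))"
  define w where "w i c = pmf (conv_pow (\<nu> i) (r i)) c * pmf (conv_pow (\<nu> i) (n i - r i)) (A i - c)"
    for i c
  define F where "F i j = real (nbar (n - r) i) * of_bool (i = j) - real (n i - r i) / real (n i) * real (A i j)"
    for i j
  have r_le: "r i \<le> n i" for i using balance[of i] by simp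
  have "progeny_matrix (n - r) (A - C) =
        (\<lambda>i j. real (nbar (n - r) i) * of_bool (i = j) - real (A i j - C i j))" for C
    by (simp add: fun_eq_iff progeny_matrix_def)
  then have "offspring_weight \<nu> r C * kemperman \<nu> (n - r) (A - C) =
        (\<Prod>i\<in>UNIV. w i (C i)) *
        det_on UNIV (\<lambda>i j. real (nbar (n - r) i) * of_bool (i = j) - real (A i j - C i j)) / D" for C
    by (simp add: kemperman_def offspring_weight_def w_def D_def prod.distrib)
  then have "(\<Sum>C\<in>{..A}. offspring_weight \<nu> r C * kemperman \<nu> (n - r) (A - C)) =
     det_on UNIV (\<lambda>i j. \<Sum>c\<in>{..A i}. w i c * (real (nbar (n - r) i) * of_bool (i = j) - real (A i j - c j))) / D"
    by (simp add: det_on_sum_rows[where f="\<lambda>i c j. real (nbar (n - r) i) * of_bool (i = j) - real (A i j - c j)"]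
        flip: sum_divide_distrib)
  also have "\<dots> = det_on UNIV (\<lambda>i j. pmf (conv_pow (\<nu> i) (n i)) (A i) * F i j) / D"
    unfolding w_def F_def conv_pow_split_row[OF r_le] ..
  also have "\<dots> = offspring_weight \<nu> n A * (det_on UNIV F / D)"
    by (simp add: det_on_scale_rows offspring_weight_def)
  also have "\<dots> = kemperman \<nu> n A"
  proof (cases "offspring_weight \<nu> n A = 0")
    case False
    then have "det_on UNIV F / D = det_on UNIV (progeny_matrix n A) / (\<Prod>i\<in>UNIV. real (nbar n i))"
      unfolding F_def D_def
      by (intro det_on_progeny_matrix_first_generation balance offspring_weight_nonzero_row)
    then show ?thesis by (simp add: kemperman_def)
  qed (simp add: kemperman_def)
  finally show ?thesis .
qed

section \<open>The genealogical process\<close>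

lemma measure_pmf_prob_bind_pmf:
  "measure_pmf.prob (bind_pmf M f) X = measure_pmf.expectation M (\<lambda>x. measure_pmf.prob (f x) X)"
  unfolding measure_pmf_bind
  by (rule measure_pmf.measure_bind[where N="count_space UNIV"])
     (auto simp: measure_pmf_in_subprob_algebra)

definition add_counts ::
    "('d \<Rightarrow> 'd \<Rightarrow> nat) \<Rightarrow> ('d \<Rightarrow> nat) \<times> ('d \<Rightarrow> 'd \<Rightarrow> nat) \<Rightarrow> ('d \<Rightarrow> nat) \<times> ('d \<Rightarrow> 'd \<Rightarrow> nat)" where
  "add_counts C s = (fst s, \<lambda>i j. C i j + snd s i j)"

lemma bp_step_add_counts: "bp_step \<nu> (add_counts C s) = map_pmf (add_counts C) (bp_step \<nu> s)"
  unfolding bp_step_def add_counts_def map_pmf_comp by (simp add: add.assoc)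

lemma bp_step_extinct: "bp_step \<nu> (\<lambda>_. 0, A) = return_pmf (\<lambda>_. 0, A)"
  by (simp add: bp_step_def conv_pow.simps)

lemma bp_state_Suc_first_generation:
  "bp_state \<nu> r (Suc N) =
     bind_pmf (bp_step \<nu> (r, \<lambda>_ _. 0)) (\<lambda>s. map_pmf (add_counts (snd s)) (bp_state \<nu> (fst s) N))"
proof (induction N)
  case 0
  have "(\<lambda>s. map_pmf (add_counts (snd s)) (bp_state \<nu> (fst s) 0)) = return_pmf"
    by (auto simp: fun_eq_iff add_counts_def)
  then show ?case by (simp add: bind_return_pmf bind_return_pmf')
next
  case (Suc N)
  have "bp_state \<nu> r (Suc (Suc N)) = bind_pmf (bp_state \<nu> r (Suc N)) (bp_step \<nu>)"
    by simp
  also have "\<dots> = bind_pmf (bp_step \<nu> (r, \<lambda>_ _. 0))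
          (\<lambda>s. bind_pmf (map_pmf (add_counts (snd s)) (bp_state \<nu> (fst s) N)) (bp_step \<nu>))"
    unfolding Suc bind_assoc_pmf ..
  also have "\<dots> = bind_pmf (bp_step \<nu> (r, \<lambda>_ _. 0))
      (\<lambda>s. map_pmf (add_counts (snd s)) (bp_state \<nu> (fst s) (Suc N)))"
    by (simp add: bind_map_pmf map_bind_pmf bp_step_add_counts)
  finally show ?case .
qed

lemma bp_state_without_roots: "bp_state \<nu> (\<lambda>_. 0) N = return_pmf (\<lambda>_. 0, \<lambda>_ _. 0)"
  by (induction N) (simp_all add: bind_return_pmf bp_step_extinct)

definition OA_event ::
    "('d::finite \<Rightarrow> nat) \<Rightarrow> ('d \<Rightarrow> int) \<Rightarrow> ('d \<Rightarrow> 'd \<Rightarrow> int) \<Rightarrow> (('d \<Rightarrow> nat) \<times> ('d \<Rightarrow> 'd \<Rightarrow> nat)) set" where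
  "OA_event r n k = {(Z, A). Z = (\<lambda>_. 0) \<and> (\<forall>j. int (r j + (\<Sum>i\<in>UNIV. A i j)) = n j)
                       \<and> (\<forall>i j. i \<noteq> j \<longrightarrow> int (A i j) = k i j)}"

definition prob_OA_within ::
    "('d::finite \<Rightarrow> ('d \<Rightarrow> nat) pmf) \<Rightarrow> nat \<Rightarrow> ('d \<Rightarrow> nat) \<Rightarrow> ('d \<Rightarrow> int) \<Rightarrow> ('d \<Rightarrow> 'd \<Rightarrow> int) \<Rightarrow> real" where
  "prob_OA_within \<nu> N r n k = measure_pmf.prob (bp_state \<nu> r N) (OA_event r n k)"

lemma prob_OA_within_Suc_ge: "prob_OA_within \<nu> N r n k \<le> prob_OA_within \<nu> (Suc N) r n k"
proof -
  let ?E = "OA_event r n k"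
  have extinct_stays: "indicator ?E s \<le> measure_pmf.prob (bp_step \<nu> s) ?E" for s
  proof (cases "s \<in> ?E")
    case True
    then obtain A where "s = (\<lambda>_. 0, A)" by (auto simp: OA_event_def)
    with True show ?thesis by (simp add: bp_step_extinct)
  qed simp
  have "prob_OA_within \<nu> N r n k = measure_pmf.expectation (bp_state \<nu> r N) (indicator ?E)"
    by (simp add: prob_OA_within_def)
  also have "\<dots> \<le> measure_pmf.expectation (bp_state \<nu> r N) (\<lambda>s. measure_pmf.prob (bp_step \<nu> s) ?E)"
    by (intro integral_mono extinct_stays measure_pmf.integrable_const_bound[where B=1]) auto
  also have "\<dots> = prob_OA_within \<nu> (Suc N) r n k"
    by (simp add: prob_OA_within_def measure_pmf_prob_bind_pmf)
  finally show ?thesis .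
qed

lemma prob_OA_eq_SUP_within: "prob_OA \<nu> r n k = (SUP N. prob_OA_within \<nu> N r n k)"
  unfolding prob_OA_def prob_OA_within_def OA_event_def ..

lemma prob_OA_within_tendsto: "(\<lambda>N. prob_OA_within \<nu> N r n k) \<longlonglongrightarrow> prob_OA \<nu> r n k"
  unfolding prob_OA_eq_SUP_within
  by (intro LIMSEQ_incseq_SUP bdd_aboveI2[where M=1] incseq_SucI prob_OA_within_Suc_ge)
     (simp add: prob_OA_within_def)

lemma add_counts_vimage_OA_event:
  "add_counts C -` OA_event r n k =
   OA_event (\<lambda>j. \<Sum>i\<in>UNIV. C i j) (\<lambda>j. n j - int (r j)) (\<lambda>i j. k i j - int (C i j))"
  unfolding OA_event_def add_counts_def by (auto simp: sum.distrib algebra_simps)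

lemma OA_event_first_generation_le:
  fixes A C :: "'d::finite \<Rightarrow> 'd \<Rightarrow> nat"
  assumes balance: "\<And>j. n j = r j + (\<Sum>i\<in>UNIV. A i j)"
    and event: "(Z, B) \<in> OA_event (\<lambda>j. \<Sum>i\<in>UNIV. C i j) (\<lambda>j. int (n j) - int (r j))
                                  (\<lambda>i j. int (A i j) - int (C i j))"
  shows "C \<le> A"
proof -
  have off_diag: "int (C i j) + int (B i j) = int (A i j)" if "i \<noteq> j" for i j
    using event that by (auto simp: OA_event_def)
  have "C i j \<le> A i j" for i j
  proof (cases "i = j")
    case True
    have "(\<Sum>l\<in>UNIV. int (C l j) + int (B l j) - int (A l j)) = 0"
      using event balance[of j] by (auto simp: OA_event_def sum_subtractf sum.distrib)
    moreover have "(\<Sum>l\<in>UNIV - {j}. int (C l j) + int (B l j) - int (A l j)) = 0"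
      by (intro sum.neutral) (auto simp: off_diag)
    ultimately have diag: "int (C j j) + int (B j j) = int (A j j)"
      by (simp add: sum.remove[of UNIV j])
    show ?thesis unfolding True using diag by linarith
  qed (use off_diag in fastforce)
  then show ?thesis by (simp add: le_fun_def)
qed

lemma prob_OA_within_Suc:
  fixes A :: "'d::finite \<Rightarrow> 'd \<Rightarrow> nat"
  assumes balance: "\<And>j. n j = r j + (\<Sum>i\<in>UNIV. A i j)"
  shows "prob_OA_within \<nu> (Suc N) r (\<lambda>j. int (n j)) (\<lambda>i j. int (A i j)) =
    (\<Sum>C\<in>{..A}. offspring_weight \<nu> r C *
       prob_OA_within \<nu> N (\<lambda>j. \<Sum>i\<in>UNIV. C i j) (\<lambda>j. int ((n - r) j)) (\<lambda>i j. int ((A - C) i j)))"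
proof -
  let ?children = "Pi_pmf UNIV (\<lambda>_. 0) (\<lambda>i. conv_pow (\<nu> i) (r i))"
  let ?Q = "\<lambda>C. prob_OA_within \<nu> N (\<lambda>j. \<Sum>i\<in>UNIV. C i j) (\<lambda>j. int (n j) - int (r j))
                  (\<lambda>i j. int (A i j) - int (C i j))"
  have "prob_OA_within \<nu> (Suc N) r (\<lambda>j. int (n j)) (\<lambda>i j. int (A i j)) =
        measure_pmf.expectation ?children ?Q"
    unfolding prob_OA_within_def bp_state_Suc_first_generation measure_pmf_prob_bind_pmf
      bp_step_def integral_map_pmf measure_map_pmf
    by (simp add: add_counts_vimage_OA_event)
  also have "\<dots> = (\<Sum>C\<in>{..A}. ?Q C * pmf ?children C)"
  proof (rule integral_measure_pmf_real)
    fix C assume "?Q C \<noteq> 0"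
    then have "OA_event (\<lambda>j. \<Sum>i\<in>UNIV. C i j) (\<lambda>j. int (n j) - int (r j))
                 (\<lambda>i j. int (A i j) - int (C i j)) \<noteq> {}"
      by (auto simp: prob_OA_within_def)
    then obtain Z B where "(Z, B) \<in> OA_event (\<lambda>j. \<Sum>i\<in>UNIV. C i j) (\<lambda>j. int (n j) - int (r j))
                                  (\<lambda>i j. int (A i j) - int (C i j))"
      by auto
    then show "C \<in> {..A}" using OA_event_first_generation_le[OF balance] by simp
  qed simp
  also have "\<dots> = (\<Sum>C\<in>{..A}. offspring_weight \<nu> r C *
       prob_OA_within \<nu> N (\<lambda>j. \<Sum>i\<in>UNIV. C i j) (\<lambda>j. int ((n - r) j)) (\<lambda>i j. int ((A - C) i j)))"
  proof (intro sum.cong refl)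
    fix C assume "C \<in> {..A}"
    then have "(\<lambda>i j. int (A i j) - int (C i j)) = (\<lambda>i j. int ((A - C) i j))"
      by (auto simp: le_fun_def fun_eq_iff of_nat_diff)
    moreover have "(\<lambda>j. int (n j) - int (r j)) = (\<lambda>j. int ((n - r) j))"
      using balance by (auto simp: fun_eq_iff of_nat_diff)
    moreover have "pmf ?children C = offspring_weight \<nu> r C"
      unfolding offspring_weight_def by (rule pmf_Pi') auto
    ultimately show "?Q C * pmf ?children C = offspring_weight \<nu> r C *
       prob_OA_within \<nu> N (\<lambda>j. \<Sum>i\<in>UNIV. C i j) (\<lambda>j. int ((n - r) j)) (\<lambda>i j. int ((A - C) i j))"
      by simp
  qed
  finally show ?thesis .
qed

lemma prob_OA_first_generation:
  fixes A :: "'d::finite \<Rightarrow> 'd \<Rightarrow> nat"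
  assumes balance: "\<And>j. n j = r j + (\<Sum>i\<in>UNIV. A i j)"
  shows "prob_OA \<nu> r (\<lambda>j. int (n j)) (\<lambda>i j. int (A i j)) =
    (\<Sum>C\<in>{..A}. offspring_weight \<nu> r C *
       prob_OA \<nu> (\<lambda>j. \<Sum>i\<in>UNIV. C i j) (\<lambda>j. int ((n - r) j)) (\<lambda>i j. int ((A - C) i j)))"
proof (rule LIMSEQ_unique)
  show "(\<lambda>N. prob_OA_within \<nu> (Suc N) r (\<lambda>j. int (n j)) (\<lambda>i j. int (A i j)))
          \<longlonglongrightarrow> prob_OA \<nu> r (\<lambda>j. int (n j)) (\<lambda>i j. int (A i j))"
    by (rule LIMSEQ_Suc[OF prob_OA_within_tendsto])
  show "(\<lambda>N. prob_OA_within \<nu> (Suc N) r (\<lambda>j. int (n j)) (\<lambda>i j. int (A i j))) \<longlonglongrightarrow>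
    (\<Sum>C\<in>{..A}. offspring_weight \<nu> r C *
       prob_OA \<nu> (\<lambda>j. \<Sum>i\<in>UNIV. C i j) (\<lambda>j. int ((n - r) j)) (\<lambda>i j. int ((A - C) i j)))"
    unfolding prob_OA_within_Suc[OF balance]
    by (intro tendsto_sum tendsto_mult_left prob_OA_within_tendsto)
qed

lemma prob_OA_without_roots:
  fixes A :: "'d::finite \<Rightarrow> 'd \<Rightarrow> nat"
  assumes balance: "\<And>j. n j = (\<Sum>i\<in>UNIV. A i j)"
  shows "prob_OA \<nu> (\<lambda>_. 0) (\<lambda>j. int (n j)) (\<lambda>i j. int (A i j)) = of_bool (A = 0)"
proof -
  have "(\<lambda>_. 0, \<lambda>_ _. 0) \<in> OA_event (\<lambda>_. 0) (\<lambda>j. int (n j)) (\<lambda>i j. int (A i j)) \<longleftrightarrow>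
        n = 0 \<and> (\<forall>i j. i \<noteq> j \<longrightarrow> A i j = 0)"
    by (auto simp: OA_event_def fun_eq_iff)
  also have "\<dots> \<longleftrightarrow> A = 0"
    using balance by (auto simp: fun_eq_iff)
  finally have root_event:
    "(\<lambda>_. 0, \<lambda>_ _. 0) \<in> OA_event (\<lambda>_. 0) (\<lambda>j. int (n j)) (\<lambda>i j. int (A i j)) \<longleftrightarrow> A = 0" .
  have "prob_OA_within \<nu> N (\<lambda>_. 0) (\<lambda>j. int (n j)) (\<lambda>i j. int (A i j)) = of_bool (A = 0)" for N
    by (simp add: prob_OA_within_def bp_state_without_roots indicator_def root_event)
  then show ?thesis
    using prob_OA_within_tendsto[of \<nu> "\<lambda>_. 0" "\<lambda>j. int (n j)" "\<lambda>i j. int (A i j)"]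
    by (simp add: LIMSEQ_const_iff)
qed

theorem prob_OA_eq_kemperman:
  fixes A :: "'d::finite \<Rightarrow> 'd \<Rightarrow> nat"
  assumes "\<And>j. n j = r j + (\<Sum>i\<in>UNIV. A i j)"
  shows "prob_OA \<nu> r (\<lambda>j. int (n j)) (\<lambda>i j. int (A i j)) = kemperman \<nu> n A"
  using assms
proof (induction "sum n UNIV" arbitrary: r n A rule: less_induct)
  case less
  show ?case
  proof (cases "r = (\<lambda>_. 0)")
    case True
    with less.prems have "\<And>j. n j = (\<Sum>i\<in>UNIV. A i j)" by simp
    then show ?thesis
      by (simp only: True prob_OA_without_roots kemperman_without_roots)
  next
    case False
    have r_le: "r j \<le> n j" for j using less.prems[of j] by simp
    from False obtain j0 where "r j0 > 0" by auto
    with r_le[of j0] have "(n - r) j0 < n j0" by simp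
    then have "sum (n - r) UNIV < sum n UNIV"
      by (intro sum_strict_mono_ex1) auto
    then have children: "prob_OA \<nu> (\<lambda>j. \<Sum>i\<in>UNIV. C i j) (\<lambda>j. int ((n - r) j)) (\<lambda>i j. int ((A - C) i j))
                = kemperman \<nu> (n - r) (A - C)" if "C \<in> {..A}" for C
    proof (rule less.hyps)
      fix j
      have "(\<Sum>i\<in>UNIV. A i j) = (\<Sum>i\<in>UNIV. C i j) + (\<Sum>i\<in>UNIV. (A - C) i j)"
        using that by (simp add: le_fun_def flip: sum.distrib)
      then show "(n - r) j = (\<Sum>i\<in>UNIV. C i j) + (\<Sum>i\<in>UNIV. (A - C) i j)"
        using less.prems[of j] by simp
    qed
    have "prob_OA \<nu> r (\<lambda>j. int (n j)) (\<lambda>i j. int (A i j)) =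
          (\<Sum>C\<in>{..A}. offspring_weight \<nu> r C * kemperman \<nu> (n - r) (A - C))"
      unfolding prob_OA_first_generation[OF less.prems] by (intro sum.cong refl) (simp only: children)
    also have "\<dots> = kemperman \<nu> n A"
      by (rule kemperman_first_generation[OF less.prems])
    finally show ?thesis .
  qed
qed

lemma prob_OA_cong_off_diagonal:
  assumes "\<And>i j. i \<noteq> j \<Longrightarrow> k i j = k' i j"
  shows "prob_OA \<nu> r n k = prob_OA \<nu> r n k'"
proof -
  have "OA_event r n k = OA_event r n k'"
    using assms by (auto simp: OA_event_def)
  then show ?thesis by (simp add: prob_OA_eq_SUP_within prob_OA_within_def)
qed

lemma kemperman_eq_det_on_support:
  "kemperman \<nu> n A =
     det_on {i. n i \<noteq> 0} (progeny_matrix n A) / (\<Prod>i\<in>UNIV. real (max (n i) 1)) * offspring_weight \<nu> n A"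
proof (cases "offspring_weight \<nu> n A = 0")
  case False
  then have "det_on UNIV (progeny_matrix n A) = det_on {i. n i \<noteq> 0} (progeny_matrix n A)"
    by (intro det_on_UNIV_eq_det_on) (simp add: offspring_weight_nonzero_row progeny_matrix_def nbar_def)
  then show ?thesis by (simp add: kemperman_def nbar_def)
qed (simp add: kemperman_def)

lemma balance_of_int_parameters:
  fixes r n :: "'d::finite \<Rightarrow> int" and k :: "'d \<Rightarrow> 'd \<Rightarrow> int"
  assumes k_nonneg: "\<And>i j. i \<noteq> j \<Longrightarrow> k i j \<ge> 0"
    and k_diag: "\<And>j. - k j j = r j + (\<Sum>i\<in>UNIV - {j}. k i j)"
    and n_ge: "\<And>i. n i \<ge> - k i i"
    and r_nonneg: "r j \<ge> 0"
  shows "nat (n j) = nat (r j) + (\<Sum>i\<in>UNIV. if j = i then nat (n i + k i i) else nat (k i j))"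
proof -
  have "int (\<Sum>i\<in>UNIV. if j = i then nat (n i + k i i) else nat (k i j)) =
        (n j + k j j) + (\<Sum>i\<in>UNIV - {j}. k i j)"
    using n_ge[of j] k_nonneg
    by (simp add: sum.remove[of UNIV j])
  also have "\<dots> = n j - r j" using k_diag[of j] by simp
  finally show ?thesis using r_nonneg by linarith
qed

lemma kemperman_of_int_parameters:
  fixes n :: "'d::finite \<Rightarrow> int" and k :: "'d \<Rightarrow> 'd \<Rightarrow> int"
  assumes n_nonneg: "\<And>i. n i \<ge> 0"
    and k_nonneg: "\<And>i j. i \<noteq> j \<Longrightarrow> k i j \<ge> 0"
    and n_ge: "\<And>i. n i \<ge> - k i i"
  shows "kemperman \<nu> (\<lambda>i. nat (n i)) (\<lambda>i j. if j = i then nat (n i + k i i) else nat (k i j)) =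
    det_on {i. n i \<noteq> 0} (\<lambda>i j. - real_of_int (k i j))
      / (\<Prod>i\<in>UNIV. real_of_int (max (n i) 1))
      * (\<Prod>i\<in>UNIV. pmf (conv_pow (\<nu> i) (nat (n i)))
            (\<lambda>j. if j = i then nat (n i + k i i) else nat (k i j)))"
proof -
  define A where "A = (\<lambda>i j. if j = i then nat (n i + k i i) else nat (k i j))"
  have support: "{i. nat (n i) \<noteq> 0} = {i. n i \<noteq> 0}"
    using n_nonneg by (auto simp: fun_eq_iff) (metis antisym)
  have "det_on {i. nat (n i) \<noteq> 0} (progeny_matrix (\<lambda>i. nat (n i)) A) =
        det_on {i. n i \<noteq> 0} (\<lambda>i j. - real_of_int (k i j))"
  proof (unfold support, intro det_on_cong)
    fix i j assume "i \<in> {i. n i \<noteq> 0}"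
    then have "real (nbar (\<lambda>i. nat (n i)) i) = real_of_int (n i)"
      using n_nonneg[of i] by (simp add: nbar_def max_def) linarith
    moreover have "real (A i j) = real_of_int (if j = i then n i + k i i else k i j)"
      using n_ge[of i] k_nonneg[of i j] by (simp add: A_def)
    ultimately show "progeny_matrix (\<lambda>i. nat (n i)) A i j = - real_of_int (k i j)"
      by (simp add: progeny_matrix_def)
  qed
  moreover have "(\<Prod>i\<in>UNIV. real (max (nat (n i)) 1)) = (\<Prod>i\<in>UNIV. real_of_int (max (n i) 1))"
    using n_nonneg by (intro prod.cong) (auto simp: max_def)
  ultimately show ?thesis
    by (simp add: kemperman_eq_det_on_support offspring_weight_def A_def)
qed

theorem theorem1p2:
  fixes \<nu> :: "'d::finite \<Rightarrow> ('d \<Rightarrow> nat) pmf"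
    and r n :: "'d \<Rightarrow> int" and k :: "'d \<Rightarrow> 'd \<Rightarrow> int"
  assumes d2: "CARD('d) \<ge> 2"
    and mean_fin: "\<And>i j. integrable (measure_pmf (\<nu> i)) (\<lambda>z. real (z j))"
    and irred: "irreducible_mat (mean_matrix \<nu>)"
    and nondeg: "\<not> degenerate \<nu>"
    and crit: "spectral_radius_le (mean_matrix \<nu>) 1"
    and r_nonneg: "\<And>i. r i \<ge> 0"
    and r_pos: "(\<Sum>i\<in>UNIV. r i) \<ge> 1"
    and k_nonneg: "\<And>i j. i \<noteq> j \<Longrightarrow> k i j \<ge> 0"
    and k_diag: "\<And>j. - k j j = r j + (\<Sum>i\<in>UNIV - {j}. k i j)"
    and n_ge: "\<And>i. n i \<ge> - k i i"
  shows "prob_OA \<nu> (\<lambda>i. nat (r i)) n k =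
    det_on {i. n i \<noteq> 0} (\<lambda>i j. - real_of_int (k i j))
      / (\<Prod>i\<in>UNIV. real_of_int (max (n i) 1))
      * (\<Prod>i\<in>UNIV. pmf (conv_pow (\<nu> i) (nat (n i)))
            (\<lambda>j. if j = i then nat (n i + k i i) else nat (k i j)))"
proof -
  define A where "A = (\<lambda>i j. if j = i then nat (n i + k i i) else nat (k i j))"
  have n_nonneg: "n i \<ge> 0" for i
  proof -
    have "0 \<le> (\<Sum>l\<in>UNIV - {i}. k l i)" using k_nonneg by (intro sum_nonneg) auto
    then show ?thesis using n_ge[of i] k_diag[of i] r_nonneg[of i] by linarith
  qed
  then have n_int: "(\<lambda>j. int (nat (n j))) = n" by (simp add: fun_eq_iff)
  have balance: "nat (n j) = nat (r j) + (\<Sum>i\<in>UNIV. A i j)" for j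
    unfolding A_def by (rule balance_of_int_parameters) (use assms in auto)
  have "prob_OA \<nu> (\<lambda>i. nat (r i)) n k =
        prob_OA \<nu> (\<lambda>i. nat (r i)) (\<lambda>j. int (nat (n j))) (\<lambda>i j. int (A i j))"
    unfolding n_int by (rule prob_OA_cong_off_diagonal) (use k_nonneg in \<open>auto simp: A_def\<close>)
  also have "\<dots> = kemperman \<nu> (\<lambda>i. nat (n i)) A"
    using balance by (rule prob_OA_eq_kemperman)
  also have "\<dots> = det_on {i. n i \<noteq> 0} (\<lambda>i j. - real_of_int (k i j))
      / (\<Prod>i\<in>UNIV. real_of_int (max (n i) 1))
      * (\<Prod>i\<in>UNIV. pmf (conv_pow (\<nu> i) (nat (n i)))
            (\<lambda>j. if j = i then nat (n i + k i i) else nat (k i j)))"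
    unfolding A_def using n_nonneg k_nonneg n_ge by (rule kemperman_of_int_parameters)
  finally show ?thesis .
qed

end
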